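(* In the setting described in the context, for every $0\le j\le\textsc{m}$: (i) $\tilde{\textsc{e}}_j=\textsc{e}_j$ and $\tilde{\mathbf f}(\textsc{e}_j)=\epsilon_j\,\mathbf J\,\mathbf f(\textsc{e}_j)$, where $\epsilon_j=\tilde p_{\textsc{m}}(\textsc{e}_j)/(a_1\cdots a_{\textsc{m}})$; (ii) with $\tilde\epsilon_j=p_{\textsc{m}}(\textsc{e}_j)/(\tilde a_1\cdots\tilde a_{\textsc{m}})$ one has $\epsilon_j\tilde\epsilon_j=1$ and $\mathrm{Sign}(\epsilon_j)=\mathrm{Sign}(\tilde\epsilon_j)=(-1)^j$.
   Context: Fix $0<p<1$ and the Jacobi theta functions $\theta_1(z)=2p^{1/4}\sin z\prod_{n\ge1}(1-p^{2n})(1-2p^{2n}\cos 2z+p^{4n})$, $\theta_2(z)=2p^{1/4}\cos z\prod_{n\ge1}(1-p^{2n})(1+2p^{2n}\cos 2z+p^{4n})$, $\theta_3(z)=\prod_{n\ge1}(1-p^{2n})(1+2p^{2n-1}\cos 2z+p^{4n-2})$, $\theta_4(z)=\prod_{n\ge1}(1-p^{2n})(1-2p^{2n-1}\cos 2z+p^{4n-2})$. For $\alpha>0$ set $[z]_1=\theta_1(\frac{\alpha}{2}z)/(\frac{\alpha}{2}\theta_1'(0))$, $[z]_r=\theta_r(\frac{\alpha}{2}z)/\theta_r(0)$ ($r=2,3,4$). Parameters: real $u_1,\dots,u_4,v_1,\dots,v_4$ with $u_r>0$, $|v_r|<u_r+\frac12$ for $r=1,2$; $\textsc{m}\in\mathbb{N}$;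 $\alpha=\pi/(u_1+u_2+\textsc{m})$; a real $u$ with $u,u+1\notin\frac{2\pi}{\alpha}\mathbb{Z}$. Let $\pi_1=\mathrm{id}$, $\pi_2=(12)(34)$, $\pi_3=(13)(24)$, $\pi_4=(14)(23)$ in $S_4$, and $c_r=\frac{2}{[u]_1[u+1]_1}\prod_{s=1}^4[u_{\pi_r(s)}-\frac12]_s[v_{\pi_r(s)}]_s$. For integers $k$ define $a_k=\prod_{r=1}^4\frac{[u_1-u_r+k]_r[u_1-v_r-\frac12+k]_r}{[u_1+k]_r[u_1-\frac12+k]_r}$, $\tilde a_k=\prod_{r=1}^4\frac{[u_2-u_{\pi_2(r)}+k]_r[u_2-v_{\pi_2(r)}-\frac12+k]_r}{[u_2+k]_r[u_2-\frac12+k]_r}$, $b_k=\sum_{r=1}^4c_r\frac{[u_1+k+\frac12+u]_r[u_1+k-\frac12-u]_r}{[u_1+k+\frac12]_r[u_1+k-\frac12]_r}$ (the numbers $a_k,\tilde a_k$, $1\le k\le\textsc{m}$, are positive). Let $\mathbf H$ be the $(\textsc{m}+1)\times(\textsc{m}+1)$ tridiagonal matrix with rows/columns indexed by $0,\dots,\textsc{m}$, $H_{k,k}=b_k$, $H_{k,k-1}=a_k$ ($1\le k\le\textsc{m}$), $H_{k,k+1}=\tilde a_{\textsc{m}-k}$ ($0\le k\le\textsc{m}-1$), all other entries $0$; its eigenvalues are real and simple, denoted $\textsc{e}_0>\textsc{e}_1>\cdots>\textsc{e}_{\textsc{m}}$. The monic elliptic Racah polynomials are $p_0(\textsc{e})=1$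 and, for $1\le k\le\textsc{m}+1$, $p_k(\textsc{e})$ = the determinant of the upper-left $k\times k$ submatrix of $\textsc{e}\mathbf I_{\textsc{m}+1}-\mathbf H$. Put $\mathbf f(\textsc{e})=(f_0(\textsc{e}),\dots,f_{\textsc{m}}(\textsc{e}))^T$ with $f_k(\textsc{e})=p_k(\textsc{e})\prod_{0\le j<k}\tilde a_{\textsc{m}-j}^{-1}$. For any quantity $X$ depending on the parameters, $\tilde X$ (or $\pi_2(X)$) denotes the same quantity with the parameters permuted by $\pi_2$, i.e. $u_s\mapsto u_{\pi_2(s)}$, $v_s\mapsto v_{\pi_2(s)}$ (so $(u_1,v_1)\leftrightarrow(u_2,v_2)$, $(u_3,v_3)\leftrightarrow(u_4,v_4)$); in particular $\tilde{\textsc{e}}_j$, $\tilde{\mathbf f}$, $\tilde p_k$ (and indeed $\pi_2(a_k)=\tilde a_k$). $\mathbf J$ is the $(\textsc{m}+1)\times(\textsc{m}+1)$ matrix with ones on the anti-diagonal and zeros elsewhere. *)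

theory Defs
  imports "HOL-Analysis.Infinite_Products" "Jordan_Normal_Form.Char_Poly"
begin

definition theta1 :: "real \<Rightarrow> real \<Rightarrow> real" where
  "theta1 p z = 2 * p powr (1/4) * sin z *
     (\<Prod>n. (1 - p^(2*Suc n)) * (1 - 2 * p^(2*Suc n) * cos (2*z) + p^(4*Suc n)))"

definition theta2 :: "real \<Rightarrow> real \<Rightarrow> real" where
  "theta2 p z = 2 * p powr (1/4) * cos z *
     (\<Prod>n. (1 - p^(2*Suc n)) * (1 + 2 * p^(2*Suc n) * cos (2*z) + p^(4*Suc n)))"

text \<open>For n \<ge> 1: p^(2n-1) and p^(4n-2); here reindexed with n = m+1.\<close>
definition theta3 :: "real \<Rightarrow> real \<Rightarrow> real" where
  "theta3 p z = (\<Prod>n. (1 - p^(2*Suc n)) * (1 + 2 * p^(2*n+1) * cos (2*z) + p^(4*n+2)))"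

definition theta4 :: "real \<Rightarrow> real \<Rightarrow> real" where
  "theta4 p z = (\<Prod>n. (1 - p^(2*Suc n)) * (1 - 2 * p^(2*n+1) * cos (2*z) + p^(4*n+2)))"

definition theta :: "nat \<Rightarrow> real \<Rightarrow> real \<Rightarrow> real" where
  "theta r p z = (if r = 1 then theta1 p z else if r = 2 then theta2 p z
                  else if r = 3 then theta3 p z else theta4 p z)"

definition brk :: "real \<Rightarrow> real \<Rightarrow> nat \<Rightarrow> real \<Rightarrow> real" where
  "brk p \<alpha> r z = (if r = 1 then theta1 p (\<alpha>/2 * z) / (\<alpha>/2 * deriv (theta1 p) 0)
                   else theta r p (\<alpha>/2 * z) / theta r p 0)"

definition alpha :: "(nat \<Rightarrow> real) \<Rightarrow> nat \<Rightarrow> real" where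
  "alpha u M = pi / (u 1 + u 2 + real M)"

definition piperm :: "nat \<Rightarrow> nat \<Rightarrow> nat" where
  "piperm r s =
    (if r = 2 then (if s = 1 then 2 else if s = 2 then 1 else if s = 3 then 4 else if s = 4 then 3 else s)
     else if r = 3 then (if s = 1 then 3 else if s = 3 then 1 else if s = 2 then 4 else if s = 4 then 2 else s)
     else if r = 4 then (if s = 1 then 4 else if s = 4 then 1 else if s = 2 then 3 else if s = 3 then 2 else s)
     else s)"

text \<open>Arguments: nome p, u, v (indexed 1..4), M, spectral parameter w (the paper's u).\<close>

definition cc :: "real \<Rightarrow> (nat \<Rightarrow> real) \<Rightarrow> (nat \<Rightarrow> real) \<Rightarrow> nat \<Rightarrow> real \<Rightarrow> nat \<Rightarrow> real" where
  "cc p u v M w r = (let br = brk p (alpha u M) in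
     2 / (br 1 w * br 1 (w + 1)) *
     (\<Prod>s\<in>{1..4}. br s (u (piperm r s) - 1/2) * br s (v (piperm r s))))"

definition acoef :: "real \<Rightarrow> (nat \<Rightarrow> real) \<Rightarrow> (nat \<Rightarrow> real) \<Rightarrow> nat \<Rightarrow> int \<Rightarrow> real" where
  "acoef p u v M k = (let br = brk p (alpha u M) in
     (\<Prod>r\<in>{1..4}. br r (u 1 - u r + k) * br r (u 1 - v r - 1/2 + k)
                   / (br r (u 1 + k) * br r (u 1 - 1/2 + k))))"

definition twist :: "(nat \<Rightarrow> real) \<Rightarrow> nat \<Rightarrow> real" where
  "twist u = u \<circ> piperm 2"

definition atil :: "real \<Rightarrow> (nat \<Rightarrow> real) \<Rightarrow> (nat \<Rightarrow> real) \<Rightarrow> nat \<Rightarrow> int \<Rightarrow> real" where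
  "atil p u v M k = acoef p (twist u) (twist v) M k"

definition bcoef :: "real \<Rightarrow> (nat \<Rightarrow> real) \<Rightarrow> (nat \<Rightarrow> real) \<Rightarrow> nat \<Rightarrow> real \<Rightarrow> int \<Rightarrow> real" where
  "bcoef p u v M w k = (let br = brk p (alpha u M) in
     (\<Sum>r\<in>{1..4}. cc p u v M w r * br r (u 1 + k + 1/2 + w) * br r (u 1 + k - 1/2 - w)
                   / (br r (u 1 + k + 1/2) * br r (u 1 + k - 1/2))))"

definition Hent :: "real \<Rightarrow> (nat \<Rightarrow> real) \<Rightarrow> (nat \<Rightarrow> real) \<Rightarrow> nat \<Rightarrow> real \<Rightarrow> nat \<Rightarrow> nat \<Rightarrow> real" where
  "Hent p u v M w i j =
     (if i = j then bcoef p u v M w (int i)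
      else if i = j + 1 \<and> 1 \<le> i \<and> i \<le> M then acoef p u v M (int i)
      else if j = i + 1 \<and> i + 1 \<le> M then atil p u v M (int M - int i)
      else 0)"

definition Hmat :: "real \<Rightarrow> (nat \<Rightarrow> real) \<Rightarrow> (nat \<Rightarrow> real) \<Rightarrow> nat \<Rightarrow> real \<Rightarrow> real mat" where
  "Hmat p u v M w = mat (M+1) (M+1) (\<lambda>(i,j). Hent p u v M w i j)"

definition Eig :: "real \<Rightarrow> (nat \<Rightarrow> real) \<Rightarrow> (nat \<Rightarrow> real) \<Rightarrow> nat \<Rightarrow> real \<Rightarrow> nat \<Rightarrow> real" where
  "Eig p u v M w j = rev (sorted_list_of_set {e. eigenvalue (Hmat p u v M w) e}) ! j"

definition ppoly :: "real \<Rightarrow> (nat \<Rightarrow> real) \<Rightarrow> (nat \<Rightarrow> real) \<Rightarrow> nat \<Rightarrow> real \<Rightarrow> nat \<Rightarrow> real \<Rightarrow> real" where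
  "ppoly p u v M w k E = det (mat k k (\<lambda>(i,j). (if i = j then E else 0) - Hent p u v M w i j))"

definition fvec :: "real \<Rightarrow> (nat \<Rightarrow> real) \<Rightarrow> (nat \<Rightarrow> real) \<Rightarrow> nat \<Rightarrow> real \<Rightarrow> nat \<Rightarrow> real \<Rightarrow> real" where
  "fvec p u v M w k E = ppoly p u v M w k E * (\<Prod>j<k. inverse (atil p u v M (int M - int j)))"

end

theory Submission
  imports Defs
begin

(*
  The swap pi_2 reverses H,
  i.e. H~ = J H J: off the diagonal because pi_2(a) = a~, on it because b~_k = b_(M-k), which follows
  from the reflection theta_r(pi/2 - z) = theta_(pi_2 r)(z) and alpha (u_1 + u_2 + M) = pi.
  As the off-diagonal entries do not vanish, a solution of the eigen-equation is determined by its
  last entry once all but the first row hold. Both f(E) and J f~(E) satisfy those rows, which gives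
  f~(E) = eps J f(E) and, comparing first and last entries, eps eps~ = 1.
  As a_k, a~_k > 0, the minors p_k satisfy a three-term recurrence with positive coefficients, so the
  zeros of p_k and p_(k+1) interlace. Hence p_M(E_j), and with it eps~ = f_M(E_j), has sign (-1)^j.
*)

lemma card_greater_in_list:
  fixes xs :: "'a::linorder list"
  assumes "distinct xs" "i \<le> length xs"
    and "\<And>j. j < i \<Longrightarrow> xs ! j \<le> x"
    and "\<And>j. i \<le> j \<Longrightarrow> j < length xs \<Longrightarrow> x < xs ! j"
  shows "card {y \<in> set xs. x < y} = length xs - i"
proof -
  have "{y \<in> set xs. x < y} = set (drop i xs)"
  proof (intro equalityI subsetI)
    fix y assume "y \<in> {y \<in> set xs. x < y}"
    then obtain j where j: "j < length xs" "y = xs ! j" "x < y" by (auto simp: set_conv_nth)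
    with assms(3)[of j] have "i \<le> j" by force
    with j show "y \<in> set (drop i xs)"
      by (auto simp: set_conv_nth intro!: exI[of _ "j - i"])
  next
    fix y assume "y \<in> set (drop i xs)"
    then show "y \<in> {y \<in> set xs. x < y}"
      using assms(2,4) by (auto simp: set_conv_nth dest: in_set_dropD)
  qed
  then show ?thesis
    using assms(1) by (simp add: distinct_card)
qed

lemma card_greater_nth_sorted:
  fixes xs :: "'a::linorder list"
  assumes "sorted_wrt (<) xs" "i < length xs"
  shows "card {y \<in> set xs. xs ! i < y} = length xs - Suc i"
  using assms by (intro card_greater_in_list)
    (auto simp: sorted_wrt_nth_less less_Suc_eq_le le_less strict_sorted_iff)

lemma sgn_prod: "sgn (prod f A) = (\<Prod>x\<in>A. sgn (f x :: 'b::linordered_idom))"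
  by (induction A rule: infinite_finite_induct) (simp_all add: sgn_mult)

lemma sgn_prod_diff:
  fixes Z :: "real set"
  assumes "finite Z" "x \<notin> Z"
  shows "sgn (\<Prod>z\<in>Z. x - z) = (-1) ^ card {z\<in>Z. x < z}"
proof -
  have "sgn (\<Prod>z\<in>Z. x - z) = (\<Prod>z\<in>Z. if x < z then -1 else 1)"
    unfolding sgn_prod using assms by (intro prod.cong) (auto simp: sgn_if)
  also have "\<dots> = (-1) ^ card {z\<in>Z. x < z}"
    using assms(1) by (simp add: prod.If_cases Int_def)
  finally show ?thesis .
qed

lemma prod_inverse_reflect:
  fixes f :: "nat \<Rightarrow> 'a::field"
  shows "(\<Prod>j<M. inverse (f (M - j))) = inverse (\<Prod>k\<in>{1..M}. f k)"
proof -
  have "(\<Prod>j<M. inverse (f (M - j))) = (\<Prod>k\<in>{1..M}. inverse (f k))"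
    by (rule prod.reindex_bij_witness[of _ "\<lambda>k. M - k" "\<lambda>j. M - j"]) auto
  then show ?thesis
    using prod_inversef[of f "{1..M}"] by (simp add: o_def)
qed

lemma rev_sorted_list_of_set_nth:
  fixes Z :: "'a::linorder set"
  assumes "finite Z" "j < card Z"
  defines "E \<equiv> rev (sorted_list_of_set Z) ! j"
  shows "E \<in> Z" "card {y \<in> Z. E < y} = j"
proof -
  define xs where "xs = sorted_list_of_set Z"
  have xs: "sorted_wrt (<) xs" "length xs = card Z" "set xs = Z"
    using assms(1) by (simp_all add: xs_def)
  have E: "E = xs ! (card Z - Suc j)"
    using assms(2) xs(2) by (simp add: E_def xs_def rev_nth)
  show "E \<in> Z"
    using assms(2) xs(2,3) by (auto simp: E)
  show "card {y \<in> Z. E < y} = j"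
    using card_greater_nth_sorted[OF xs(1), of "card Z - Suc j"] assms(2) xs(2,3) by (simp add: E)
qed

section \<open>Real polynomials\<close>

lemma linear_factors_dvd_poly:
  fixes P :: "'a::idom poly"
  assumes "finite Z" "\<And>z. z \<in> Z \<Longrightarrow> poly P z = 0"
  shows "(\<Prod>z\<in>Z. [:-z, 1:]) dvd P"
  using assms
proof (induction Z arbitrary: P rule: finite_induct)
  case (insert z Z)
  obtain Q where Q: "P = [:-z, 1:] * Q"
    using insert.prems poly_eq_0_iff_dvd by blast
  have "poly Q y = 0" if "y \<in> Z" for y
    using insert.prems[of y] insert.hyps(2) that by (auto simp: Q)
  then have "(\<Prod>z\<in>Z. [:-z, 1:]) dvd Q"
    by (rule insert.IH)
  then show ?case
    unfolding Q prod.insert[OF insert.hyps] by (rule mult_dvd_mono[OF dvd_refl])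
qed simp

lemma monic_poly_eq_prod_roots:
  fixes P :: "'a::idom poly"
  assumes monic: "lead_coeff P = 1" and roots: "card {x. poly P x = 0} = degree P"
  shows "poly P x = (\<Prod>z\<in>{x. poly P x = 0}. x - z)"
proof -
  define Z where "Z = {x. poly P x = 0}"
  let ?Q = "\<Prod>z\<in>Z. [:-z, 1:]"
  have "P \<noteq> 0"
    using monic by auto
  then have "finite Z"
    unfolding Z_def by (rule poly_roots_finite)
  then obtain R where R: "P = ?Q * R"
    using linear_factors_dvd_poly[of Z P] unfolding Z_def by blast
  have Q_monic: "lead_coeff ?Q = 1"
    by (simp add: lead_coeff_prod)
  have Q_degree: "degree ?Q = card Z"
    using \<open>finite Z\<close> by (simp add: degree_prod_eq_sum_degree)
  have "R \<noteq> 0"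
    using R \<open>P \<noteq> 0\<close> by auto
  then have "degree R = 0"
    using R Q_degree roots Q_monic \<open>P \<noteq> 0\<close> degree_mult_eq[of ?Q R] unfolding Z_def by force
  moreover have "lead_coeff R = 1"
    using R monic Q_monic lead_coeff_mult[of ?Q R] by simp
  ultimately have "R = 1"
    by (metis monom_eq_1_iff monom_eq_const_iff lead_coeff_monom degree_eq_zeroE)
  then show ?thesis
    unfolding Z_def[symmetric] by (simp add: R poly_prod)
qed

lemma monic_poly_sgn_at_bot:
  fixes P :: "real poly"
  assumes "lead_coeff P = 1"
  obtains L where "\<And>x. x \<le> L \<Longrightarrow> sgn (poly P x) = (-1) ^ degree P"
proof -
  let ?Q = "Polynomial.smult ((-1) ^ degree P) (P \<circ>\<^sub>p [:0, -1:])"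
  have "lead_coeff (P \<circ>\<^sub>p [:0, -1:]) = (-1) ^ degree P"
    using assms by (subst lead_coeff_comp) auto
  then have "lead_coeff ?Q = 1"
    by (simp add: power_mult_distrib[symmetric])
  then obtain R where R: "\<And>x. x \<ge> R \<Longrightarrow> 1 \<le> poly ?Q x"
    using poly_pinfty_gt_lc[of ?Q] by auto
  have "sgn (poly P x) = (-1) ^ degree P" if "x \<le> -R" for x
  proof -
    have "0 < (-1) ^ degree P * poly P x"
      using R[of "-x"] that by (simp add: poly_pcompose)
    then show ?thesis
      by (cases "even (degree P)") (auto simp: sgn_if zero_less_mult_iff)
  qed
  then show ?thesis
    using that by blast
qed

lemma root_between_sign_change:
  fixes f :: "real \<Rightarrow> real"
  assumes "a < b" "continuous_on {a..b} f" "f a * f b < 0"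
  obtains z where "a < z" "z < b" "f z = 0"
proof -
  from assms(3) consider "f a < 0" "0 < f b" | "0 < f a" "f b < 0"
    by (auto simp: mult_less_0_iff)
  then obtain z where "a \<le> z" "z \<le> b" "f z = 0" "z \<noteq> a" "z \<noteq> b"
  proof cases
    case 1
    then show ?thesis
      using IVT'[of f a 0 b] assms(1,2) that by force
  next
    case 2
    then show ?thesis
      using IVT2'[of f b 0 a] assms(1,2) that by force
  qed
  then show ?thesis
    using that[of z] by (simp add: less_le)
qed

lemma roots_between_sign_changes:
  fixes f :: "real \<Rightarrow> real" and ts :: "real list"
  assumes cont: "continuous_on UNIV f" and sorted: "sorted_wrt (<) ts"
    and change: "\<And>i. Suc i < length ts \<Longrightarrow> f (ts ! i) * f (ts ! Suc i) < 0"
  obtains zs where "length zs = length ts - 1" "sorted_wrt (<) zs"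
    and "\<And>i. i < length zs \<Longrightarrow> ts ! i < zs ! i \<and> zs ! i < ts ! Suc i \<and> f (zs ! i) = 0"
proof -
  have "\<exists>z. ts ! i < z \<and> z < ts ! Suc i \<and> f z = 0" if i: "Suc i < length ts" for i
    using sorted i continuous_on_subset[OF cont] change[OF i]
    by (metis root_between_sign_change sorted_wrt_nth_less lessI subset_UNIV)
  then obtain z where z: "\<And>i. Suc i < length ts \<Longrightarrow> ts ! i < z i \<and> z i < ts ! Suc i \<and> f (z i) = 0"
    by metis
  define zs where "zs = map z [0..<length ts - 1]"
  have z_mono: "z i < z j" if "i < j" "Suc j < length ts" for i j
  proof -
    have "ts ! Suc i \<le> ts ! j"
      using sorted that by (cases "Suc i = j") (auto simp: sorted_wrt_nth_less less_imp_le)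
    then show ?thesis
      using z[of i] z[of j] that by linarith
  qed
  show ?thesis
  proof (rule that)
    show "length zs = length ts - 1"
      by (simp add: zs_def)
    show "sorted_wrt (<) zs"
      using z_mono by (auto simp: zs_def sorted_wrt_iff_nth_less)
    show "ts ! i < zs ! i \<and> zs ! i < ts ! Suc i \<and> f (zs ! i) = 0" if "i < length zs" for i
      using z[of i] that by (simp add: zs_def)
  qed
qed

section \<open>Sturm sequences from three-term recurrences\<close>

(* The sign condition says that the zeros of D (k - 1) strictly interlace those of D k. *)
definition interlacing :: "(nat \<Rightarrow> real \<Rightarrow> real) \<Rightarrow> nat \<Rightarrow> bool" where
  "interlacing D k \<longleftrightarrow> card {x. D k x = 0} = k \<and>
     (\<forall>z. D k z = 0 \<longrightarrow> sgn (D (k - 1) z) = (-1) ^ card {y. D k y = 0 \<and> z < y})"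

locale three_term_recurrence =
  fixes D :: "nat \<Rightarrow> real \<Rightarrow> real" and b c :: "nat \<Rightarrow> real" and N :: nat
  assumes D_0: "D 0 x = 1"
    and D_1: "D (Suc 0) x = x - b 0"
    and D_Suc_Suc: "Suc (Suc k) \<le> N \<Longrightarrow> D (Suc (Suc k)) x = (x - b (Suc k)) * D (Suc k) x - c k * D k x"
    and c_pos: "Suc (Suc k) \<le> N \<Longrightarrow> 0 < c k"
    and D_monic: "k \<le> N \<Longrightarrow> \<exists>P. lead_coeff P = 1 \<and> degree P = k \<and> D k = poly P"
begin

lemma interlacing_1: "interlacing D 1"
  unfolding interlacing_def
proof (intro conjI allI impI)
  show "card {x. D 1 x = 0} = 1"
    by (simp add: D_1)
  fix z assume "D 1 z = 0"
  then have no_root_above: "{y. D 1 y = 0 \<and> z < y} = {}"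
    by (auto simp: D_1)
  show "sgn (D (1 - 1) z) = (-1) ^ card {y. D 1 y = 0 \<and> z < y}"
    unfolding no_root_above by (simp add: D_0)
qed

lemma sorted_roots:
  assumes "interlacing D k" "1 \<le> k"
  defines "ys \<equiv> sorted_list_of_set {x. D k x = 0}"
  shows "sorted_wrt (<) ys" "length ys = k" "set ys = {x. D k x = 0}"
proof -
  have "finite {x. D k x = 0}"
    using assms(1,2) by (intro card_ge_0_finite) (simp add: interlacing_def)
  then show "sorted_wrt (<) ys" "length ys = k" "set ys = {x. D k x = 0}"
    using assms(1) by (simp_all add: ys_def interlacing_def)
qed

lemma sgn_next_at_roots:
  assumes I: "interlacing D k" and k: "1 \<le> k" "Suc k \<le> N" and i: "i < k"
  defines "ys \<equiv> sorted_list_of_set {x. D k x = 0}"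
  shows "sgn (D (Suc k) (ys ! i)) = (-1) ^ (k - i)"
proof -
  note ys = sorted_roots[OF I k(1), folded ys_def]
  have root: "D k (ys ! i) = 0"
    using nth_mem[of i ys] ys i by simp
  have "D (Suc k) (ys ! i) = - c (k - 1) * D (k - 1) (ys ! i)"
    using D_Suc_Suc[of "k - 1" "ys ! i"] k root by simp
  moreover have "0 < c (k - 1)"
    using c_pos[of "k - 1"] k by simp
  moreover have "{y. D k y = 0 \<and> ys ! i < y} = {y \<in> set ys. ys ! i < y}"
    using ys(3) by auto
  then have "card {y. D k y = 0 \<and> ys ! i < y} = k - Suc i"
    using card_greater_nth_sorted[of ys i] ys i by simp
  ultimately have "sgn (D (Suc k) (ys ! i)) = - ((-1) ^ (k - Suc i))"
    using I root by (simp add: interlacing_def sgn_mult)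
  moreover have "k - i = Suc (k - Suc i)"
    using i by simp
  ultimately show ?thesis
    by simp
qed

lemma sgn_between_roots:
  assumes I: "interlacing D k" and k: "1 \<le> k" "k \<le> N" and i: "i \<le> k"
  defines "ys \<equiv> sorted_list_of_set {x. D k x = 0}"
  assumes below: "\<And>j. j < i \<Longrightarrow> ys ! j < z"
    and above: "\<And>j. i \<le> j \<Longrightarrow> j < k \<Longrightarrow> z < ys ! j"
  shows "sgn (D k z) = (-1) ^ (k - i)"
proof -
  note ys = sorted_roots[OF I k(1), folded ys_def]
  obtain P where P: "lead_coeff P = 1" "degree P = k" "D k = poly P"
    using D_monic[OF k(2)] by blast
  have "card {x. poly P x = 0} = degree P"
    using I P by (simp add: interlacing_def)
  then have "poly P z = (\<Prod>y\<in>{x. poly P x = 0}. z - y)"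
    by (rule monic_poly_eq_prod_roots[OF P(1)])
  then have "D k z = (\<Prod>y\<in>set ys. z - y)"
    using P(3) ys(3) by simp
  moreover have "z \<notin> set ys"
    using below above ys(2) by (metis in_set_conv_nth less_irrefl not_less)
  moreover have "card {y \<in> set ys. z < y} = length ys - i"
  proof (rule card_greater_in_list)
    show "distinct ys" "i \<le> length ys"
      using ys i by (simp_all add: strict_sorted_iff)
    show "ys ! j \<le> z" if "j < i" for j
      using below[OF that] by simp
    show "z < ys ! j" if "i \<le> j" "j < length ys" for j
      using above that ys(2) by simp
  qed
  ultimately show ?thesis
    using ys(2) by (simp add: sgn_prod_diff)
qed

lemma sgn_far_out:
  assumes "k \<le> N"
  obtains L R where "\<And>x. x \<le> L \<Longrightarrow> sgn (D k x) = (-1) ^ k" and "\<And>x. R \<le> x \<Longrightarrow> 0 < D k x"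
proof -
  obtain P where P: "lead_coeff P = 1" "degree P = k" "D k = poly P"
    using D_monic[OF assms] by blast
  obtain L where "\<And>x. x \<le> L \<Longrightarrow> sgn (D k x) = (-1) ^ k"
    using monic_poly_sgn_at_bot[OF P(1)] P by metis
  moreover obtain R where "\<And>x. R \<le> x \<Longrightarrow> 0 < D k x"
    using poly_pinfty_gt_lc[of P] P by force
  ultimately show ?thesis
    using that by blast
qed

lemma sign_alternating_points:
  assumes I: "interlacing D k" and k: "1 \<le> k" "Suc k \<le> N"
  defines "ys \<equiv> sorted_list_of_set {x. D k x = 0}"
  obtains ts where "sorted_wrt (<) ts" "length ts = Suc (Suc k)"
    and "\<And>j. j < k \<Longrightarrow> ts ! Suc j = ys ! j"
    and "\<And>i. i \<le> Suc k \<Longrightarrow> sgn (D (Suc k) (ts ! i)) = (-1) ^ (Suc k - i)"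
proof -
  define Y where "Y = {x. D k x = 0}"
  note ys = sorted_roots[OF I k(1), folded Y_def ys_def]
  have Y: "finite Y" "Y \<noteq> {}"
    using ys k(1) by (auto simp flip: ys(3))
  obtain L R where L: "\<And>x. x \<le> L \<Longrightarrow> sgn (D (Suc k) x) = (-1) ^ Suc k"
    and R: "\<And>x. R \<le> x \<Longrightarrow> 0 < D (Suc k) x"
    using sgn_far_out[OF k(2)] by blast
  define ts where "ts = min L (Min Y - 1) # ys @ [max R (Max Y + 1)]"
  have "min L (Min Y - 1) < y" "y < max R (Max Y + 1)" if "y \<in> set ys" for y
    using Min_le[OF Y(1), of y] Max_ge[OF Y(1), of y] that ys(3) by (auto simp: Y_def)
  moreover obtain y0 where "y0 \<in> set ys"
    using Y ys(3) by (auto simp: Y_def)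
  ultimately have "sorted_wrt (<) ts"
    using ys(1) by (fastforce simp: ts_def sorted_wrt_append)
  moreover have "length ts = Suc (Suc k)"
    using ys by (simp add: ts_def)
  moreover have ts_nth: "ts ! Suc j = ys ! j" if "j < k" for j
    using that ys(2) by (simp add: ts_def nth_append)
  moreover have "sgn (D (Suc k) (ts ! i)) = (-1) ^ (Suc k - i)" if "i \<le> Suc k" for i
  proof -
    consider "i = 0" | j where "i = Suc j" "j < k" | "i = Suc k"
      using \<open>i \<le> Suc k\<close> by (cases i) (auto simp: le_Suc_eq)
    then show ?thesis
    proof cases
      case 1
      then show ?thesis
        using L by (simp add: ts_def)
    next
      case (2 j)
      then show ?thesis
        using sgn_next_at_roots[OF I k 2(2)] ts_nth[OF 2(2)] by (simp add: Y_def ys_def)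
    next
      case 3
      then show ?thesis
        using R ys by (simp add: ts_def nth_append)
    qed
  qed
  ultimately show ?thesis
    using that by blast
qed

lemma roots_Suc_between:
  assumes I: "interlacing D k" and k: "1 \<le> k" "Suc k \<le> N"
  defines "ys \<equiv> sorted_list_of_set {x. D k x = 0}"
  obtains ts zs where "sorted_wrt (<) ts" "length ts = Suc (Suc k)"
    and "\<And>j. j < k \<Longrightarrow> ts ! Suc j = ys ! j"
    and "sorted_wrt (<) zs" "length zs = Suc k" "set zs = {x. D (Suc k) x = 0}"
    and "\<And>i. i < Suc k \<Longrightarrow> ts ! i < zs ! i \<and> zs ! i < ts ! Suc i"
proof -
  obtain ts where ts: "sorted_wrt (<) ts" "length ts = Suc (Suc k)" "\<And>j. j < k \<Longrightarrow> ts ! Suc j = ys ! j"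
    and ts_sgn: "\<And>i. i \<le> Suc k \<Longrightarrow> sgn (D (Suc k) (ts ! i)) = (-1) ^ (Suc k - i)"
    using sign_alternating_points[OF I k] unfolding ys_def by blast
  have sign_change: "D (Suc k) (ts ! i) * D (Suc k) (ts ! Suc i) < 0" if "Suc i < length ts" for i
  proof -
    have "sgn (D (Suc k) (ts ! i)) = - sgn (D (Suc k) (ts ! Suc i))"
      using ts_sgn[of i] ts_sgn[of "Suc i"] that ts(2) by (simp add: Suc_diff_le)
    moreover have "sgn (D (Suc k) (ts ! Suc i)) \<noteq> 0"
      using ts_sgn[of "Suc i"] that ts(2) by simp
    ultimately show ?thesis
      by (auto simp: sgn_if mult_less_0_iff split: if_splits)
  qed
  obtain P where P: "lead_coeff P = 1" "degree P = Suc k" "D (Suc k) = poly P"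
    using D_monic[OF k(2)] by blast
  have cont: "continuous_on UNIV (D (Suc k))"
    unfolding P(3) by (intro continuous_intros)
  obtain zs where zs: "length zs = length ts - 1" "sorted_wrt (<) zs"
    and between: "\<And>i. i < length zs \<Longrightarrow> ts ! i < zs ! i \<and> zs ! i < ts ! Suc i \<and> D (Suc k) (zs ! i) = 0"
    using roots_between_sign_changes[of "D (Suc k)" ts, OF cont ts(1) sign_change] by blast
  define Z where "Z = {x. D (Suc k) x = 0}"
  have "set zs \<subseteq> Z"
    using between by (auto simp: Z_def in_set_conv_nth)
  moreover have "P \<noteq> 0"
    using P(1) by auto
  then have "finite Z" "card Z \<le> Suc k"
    using P poly_roots_finite[of P] card_poly_roots_bound[of P] by (auto simp: Z_def)
  moreover have "card (set zs) = Suc k"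
    using zs ts(2) by (simp add: distinct_card strict_sorted_iff)
  ultimately have "set zs = Z"
    using card_seteq[of Z "set zs"] by auto
  then show ?thesis
    using that[OF ts(1-3) zs(2)] zs(1) ts(2) between by (simp add: Z_def)
qed

lemma interlacing_Suc:
  assumes I: "interlacing D k" and k: "1 \<le> k" "Suc k \<le> N"
  shows "interlacing D (Suc k)"
proof -
  obtain ts zs where ts: "sorted_wrt (<) ts" "length ts = Suc (Suc k)"
    "\<And>j. j < k \<Longrightarrow> ts ! Suc j = sorted_list_of_set {x. D k x = 0} ! j"
    and zs: "sorted_wrt (<) zs" "length zs = Suc k" "set zs = {x. D (Suc k) x = 0}"
    and between: "\<And>i. i < Suc k \<Longrightarrow> ts ! i < zs ! i \<and> zs ! i < ts ! Suc i"
    using roots_Suc_between[OF I k] by blast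
  show ?thesis
    unfolding interlacing_def
  proof (intro conjI allI impI)
    show "card {x. D (Suc k) x = 0} = Suc k"
      using zs by (simp flip: zs(3) add: distinct_card strict_sorted_iff)
    fix z assume "D (Suc k) z = 0"
    then have "z \<in> set zs"
      using zs(3) by simp
    then obtain i where i: "i < Suc k" "z = zs ! i"
      using zs(2) by (auto simp: in_set_conv_nth)
    have "{y. D (Suc k) y = 0 \<and> z < y} = {y \<in> set zs. zs ! i < y}"
      using zs(3) i by auto
    then have "card {y. D (Suc k) y = 0 \<and> z < y} = k - i"
      using card_greater_nth_sorted[OF zs(1)] zs(2) i by simp
    moreover have "sgn (D k z) = (-1) ^ (k - i)"
    proof (rule sgn_between_roots[OF I k(1) _ _])
      show "k \<le> N" "i \<le> k"
        using k i by simp_all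
      show "sorted_list_of_set {x. D k x = 0} ! j < z" if "j < i" for j
      proof -
        have "ts ! Suc j \<le> ts ! i"
          using ts(1,2) that i by (cases "Suc j = i") (auto simp: sorted_wrt_nth_less less_imp_le)
        then show ?thesis
          using between[of i] ts(3)[of j] i that by simp
      qed
      show "z < sorted_list_of_set {x. D k x = 0} ! j" if "i \<le> j" "j < k" for j
      proof -
        have "ts ! Suc i \<le> ts ! Suc j"
          using ts(1,2) that by (cases "i = j") (auto simp: sorted_wrt_nth_less less_imp_le)
        then show ?thesis
          using between[of i] ts(3)[of j] i that by simp
      qed
    qed
    ultimately show "sgn (D (Suc k - 1) z) = (-1) ^ card {y. D (Suc k) y = 0 \<and> z < y}"
      by simp
  qed
qed

lemma interlacing_all: "1 \<le> k \<Longrightarrow> k \<le> N \<Longrightarrow> interlacing D k"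
proof (induction k rule: dec_induct)
  case base
  show ?case by (rule interlacing_1)
next
  case (step k)
  then show ?case by (intro interlacing_Suc) simp_all
qed

end

section \<open>Tridiagonal matrices\<close>

definition tridiag :: "(nat \<Rightarrow> 'a) \<Rightarrow> (nat \<Rightarrow> 'a) \<Rightarrow> (nat \<Rightarrow> 'a) \<Rightarrow> nat \<Rightarrow> nat \<Rightarrow> 'a::zero" where
  "tridiag l d r i j = (if i = j then d i else if i = Suc j then l i else if j = Suc i then r i else 0)"

definition char_mat :: "(nat \<Rightarrow> nat \<Rightarrow> 'a) \<Rightarrow> nat \<Rightarrow> 'a \<Rightarrow> 'a::comm_ring_1 mat" where
  "char_mat h k x = mat k k (\<lambda>(i, j). (if i = j then x else 0) - h i j)"

definition char_minor :: "(nat \<Rightarrow> nat \<Rightarrow> 'a) \<Rightarrow> nat \<Rightarrow> 'a \<Rightarrow> 'a::comm_ring_1" where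
  "char_minor h k x = det (char_mat h k x)"

lemma char_mat_carrier [simp]: "char_mat h k x \<in> carrier_mat k k"
  by (simp add: char_mat_def)

lemma char_minor_cong:
  assumes "\<And>i j. i < k \<Longrightarrow> j < k \<Longrightarrow> h i j = h' i j"
  shows "char_minor h k x = char_minor h' k x"
proof -
  have "char_mat h k x = char_mat h' k x"
    using assms by (intro eq_matI) (auto simp: char_mat_def)
  then show ?thesis
    by (simp add: char_minor_def)
qed

lemma char_minor_0 [simp]: "char_minor h 0 x = 1"
  by (simp add: char_minor_def char_mat_def)

lemma char_minor_eq_poly_char_poly:
  fixes h :: "nat \<Rightarrow> nat \<Rightarrow> 'a::field"
  shows "char_minor h k = poly (char_poly (mat k k (\<lambda>(i, j). h i j)))"
proof
  fix x
  have "- char_matrix (mat k k (\<lambda>(i, j). h i j)) x = char_mat h k x"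
    by (rule eq_matI) (auto simp: char_matrix_def char_mat_def)
  then show "char_minor h k x = poly (char_poly (mat k k (\<lambda>(i, j). h i j))) x"
    by (simp add: char_minor_def char_poly_matrix[of _ k])
qed

lemma char_minor_monic:
  fixes h :: "nat \<Rightarrow> nat \<Rightarrow> 'a::field"
  shows "\<exists>P. lead_coeff P = 1 \<and> degree P = k \<and> char_minor h k = poly P"
proof (intro exI conjI)
  let ?P = "char_poly (mat k k (\<lambda>(i, j). h i j))"
  show "lead_coeff ?P = 1" "degree ?P = k"
    using degree_monic_char_poly[of "mat k k (\<lambda>(i, j). h i j)" k] by simp_all
  show "char_minor h k = poly ?P"
    by (rule char_minor_eq_poly_char_poly)
qed

lemma eigenvalue_iff_char_minor:
  fixes h :: "nat \<Rightarrow> nat \<Rightarrow> 'a::field"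
  shows "eigenvalue (mat k k (\<lambda>(i, j). h i j)) e \<longleftrightarrow> char_minor h k e = 0"
  by (simp add: eigenvalue_root_char_poly[of _ k] char_minor_eq_poly_char_poly)

lemma char_minor_1: "char_minor h (Suc 0) x = x - h 0 0"
proof -
  have "char_minor h (Suc 0) x = char_mat h (Suc 0) x $$ (0, 0) * cofactor (char_mat h (Suc 0) x) 0 0"
    unfolding char_minor_def by (subst laplace_expansion_column[of _ "Suc 0" 0]) simp_all
  moreover have "det (mat_delete (char_mat h (Suc 0) x) 0 0) = 1"
    using mat_delete_carrier[OF char_mat_carrier[of h "Suc 0" x]] by simp
  ultimately show ?thesis
    by (simp add: cofactor_def char_mat_def)
qed

lemma char_minor_tridiag_Suc_Suc:
  "char_minor (tridiag l d r) (Suc (Suc n)) x =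
     (x - d (Suc n)) * char_minor (tridiag l d r) (Suc n) x
     - l (Suc n) * r n * char_minor (tridiag l d r) n x"
proof -
  let ?h = "tridiag l d r"
  let ?A = "char_mat ?h (Suc (Suc n)) x"
  let ?B = "mat_delete ?A n (Suc n)"
  have "char_minor ?h (Suc (Suc n)) x = (\<Sum>i<Suc (Suc n). ?A $$ (i, Suc n) * cofactor ?A i (Suc n))"
    unfolding char_minor_def by (rule laplace_expansion_column[OF char_mat_carrier]) simp
  also have "\<dots> = ?A $$ (n, Suc n) * cofactor ?A n (Suc n) + ?A $$ (Suc n, Suc n) * cofactor ?A (Suc n) (Suc n)"
    by (simp add: sum.neutral char_mat_def tridiag_def)
  also have "cofactor ?A (Suc n) (Suc n) = char_minor ?h (Suc n) x"
  proof -
    have "mat_delete ?A (Suc n) (Suc n) = char_mat ?h (Suc n) x"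
      by (rule eq_matI) (auto simp: mat_delete_def char_mat_def)
    then show ?thesis
      by (simp add: cofactor_def char_minor_def)
  qed
  also have "cofactor ?A n (Suc n) = l (Suc n) * char_minor ?h n x"
  proof -
    have B: "?B \<in> carrier_mat (Suc n) (Suc n)"
      using mat_delete_carrier[OF char_mat_carrier[of ?h "Suc (Suc n)" x]] by simp
    have "det ?B = (\<Sum>j<Suc n. ?B $$ (n, j) * cofactor ?B n j)"
      by (rule laplace_expansion_row[OF B]) simp
    also have "\<dots> = ?B $$ (n, n) * cofactor ?B n n"
      by (simp add: sum.neutral char_mat_def mat_delete_def tridiag_def)
    also have "?B $$ (n, n) = - l (Suc n)"
      by (simp add: char_mat_def mat_delete_def tridiag_def)
    also have "cofactor ?B n n = char_minor ?h n x"
    proof -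
      have "mat_delete ?B n n = char_mat ?h n x"
        by (rule eq_matI) (auto simp: mat_delete_def char_mat_def)
      then show ?thesis
        by (simp add: cofactor_def char_minor_def)
    qed
    finally show ?thesis
      by (simp add: cofactor_def)
  qed
  also have "?A $$ (n, Suc n) = - r n"
    by (simp add: char_mat_def tridiag_def)
  also have "?A $$ (Suc n, Suc n) = x - d (Suc n)"
    by (simp add: char_mat_def tridiag_def)
  finally show ?thesis
    by (simp add: algebra_simps)
qed

lemma interlacing_char_minor_tridiag:
  fixes l d r :: "nat \<Rightarrow> real"
  assumes pos: "\<And>i. 1 \<le> i \<Longrightarrow> i < n \<Longrightarrow> 0 < l i * r (i - 1)" and n: "1 \<le> n"
  shows "interlacing (\<lambda>k. char_minor (tridiag l d r) k) n"
proof -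
  interpret three_term_recurrence "\<lambda>k. char_minor (tridiag l d r) k" d "\<lambda>k. l (Suc k) * r k" n
  proof
    show "char_minor (tridiag l d r) (Suc 0) x = x - d 0" for x
      by (simp add: char_minor_1 tridiag_def)
    show "0 < l (Suc k) * r k" if "Suc (Suc k) \<le> n" for k
      using pos[of "Suc k"] that by simp
  qed (simp_all add: char_minor_tridiag_Suc_Suc char_minor_monic mult.assoc)
  show ?thesis
    using n by (rule interlacing_all) simp
qed

definition mirror :: "nat \<Rightarrow> (nat \<Rightarrow> 'a) \<Rightarrow> nat \<Rightarrow> 'a" where
  "mirror M f i = f (M - i)"

definition tridiag_vec :: "(nat \<Rightarrow> 'a) \<Rightarrow> (nat \<Rightarrow> 'a) \<Rightarrow> (nat \<Rightarrow> 'a) \<Rightarrow> 'a \<Rightarrow> nat \<Rightarrow> 'a::field" where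
  "tridiag_vec l d r x k = char_minor (tridiag l d r) k x * (\<Prod>j<k. inverse (r j))"

lemma tridiag_vec_0 [simp]: "tridiag_vec l d r x 0 = 1"
  by (simp add: tridiag_vec_def)

lemma tridiag_vec_Suc:
  assumes "r k \<noteq> 0"
  shows "r k * tridiag_vec l d r x (Suc k) = char_minor (tridiag l d r) (Suc k) x * (\<Prod>j<k. inverse (r j))"
  using assms by (simp add: tridiag_vec_def field_simps)

lemma tridiag_vec_rec:
  assumes "r k \<noteq> 0"
  shows "(x - d (Suc k)) * tridiag_vec l d r x (Suc k) - l (Suc k) * tridiag_vec l d r x k
    = char_minor (tridiag l d r) (Suc (Suc k)) x * (\<Prod>j<Suc k. inverse (r j))"
  using assms by (simp add: tridiag_vec_def char_minor_tridiag_Suc_Suc field_simps)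

locale unreduced_tridiag =
  fixes l d r :: "nat \<Rightarrow> 'a::field" and M :: nat
  assumes sub_nonzero: "\<And>i. 1 \<le> i \<Longrightarrow> i \<le> M \<Longrightarrow> l i \<noteq> 0"
    and super_nonzero: "\<And>i. i < M \<Longrightarrow> r i \<noteq> 0"
begin

lemma unreduced_tridiag_mirror: "unreduced_tridiag (mirror M r) (mirror M l) M"
proof
  show "mirror M r i \<noteq> 0" if "1 \<le> i" "i \<le> M" for i
    using super_nonzero[of "M - i"] that by (simp add: mirror_def)
  show "mirror M l i \<noteq> 0" if "i < M" for i
    using sub_nonzero[of "M - i"] that by (simp add: mirror_def)
qed

lemma tridiag_vec_row_0:
  assumes "0 < M"
  shows "d 0 * tridiag_vec l d r x 0 + r 0 * tridiag_vec l d r x (Suc 0) = x * tridiag_vec l d r x 0"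
  using tridiag_vec_Suc[of r 0 l d x] super_nonzero[OF assms] by (simp add: char_minor_1 tridiag_def)

lemma tridiag_vec_row:
  assumes "Suc k < M"
  shows "l (Suc k) * tridiag_vec l d r x k + d (Suc k) * tridiag_vec l d r x (Suc k)
    + r (Suc k) * tridiag_vec l d r x (Suc (Suc k)) = x * tridiag_vec l d r x (Suc k)"
  using tridiag_vec_Suc[of r "Suc k" l d x] tridiag_vec_rec[of r k x d l] super_nonzero assms
  by (simp add: algebra_simps)

lemma tridiag_vec_last_row:
  assumes "0 < M"
  shows "l M * tridiag_vec l d r x (M - 1) + d M * tridiag_vec l d r x M = x * tridiag_vec l d r x M
    \<longleftrightarrow> char_minor (tridiag l d r) (Suc M) x = 0"
proof -
  obtain k where M: "M = Suc k"
    using assms by (cases M) auto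
  have "(\<Prod>j<Suc k. inverse (r j)) \<noteq> 0"
    using super_nonzero by (simp add: M)
  then show ?thesis
    using tridiag_vec_rec[of r k x d l] super_nonzero by (auto simp: M algebra_simps)
qed

lemma null_vector_backward:
  assumes M: "0 < M"
    and row: "\<And>k. Suc k < M \<Longrightarrow>
      l (Suc k) * y k + d (Suc k) * y (Suc k) + r (Suc k) * y (Suc (Suc k)) = x * y (Suc k)"
    and last_row: "l M * y (M - 1) + d M * y M = x * y M"
    and top: "y M = 0"
  shows "k \<le> M \<Longrightarrow> y k = 0"
proof -
  have zero_from_top: "y (M - Suc j) = 0 \<and> y (M - j) = 0" if "j < M" for j
    using that
  proof (induction j)
    case 0
    then show ?case
      using last_row top sub_nonzero[of M] by simp
  next
    case (Suc j)
    then obtain k where k: "M = Suc (Suc (k + j))"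
      using less_iff_Suc_add[of "Suc j" M] by auto
    have "y (Suc k) = 0" "y (Suc (Suc k)) = 0"
      using Suc by (simp_all add: k)
    then have "l (Suc k) * y k = 0"
      using row[of k] by (simp add: k)
    moreover have "l (Suc k) \<noteq> 0"
      using sub_nonzero[of "Suc k"] by (simp add: k)
    ultimately show ?case
      using \<open>y (Suc k) = 0\<close> by (simp add: k)
  qed
  assume "k \<le> M"
  then show "y k = 0"
    using top zero_from_top[of "M - Suc k"] by (cases "k = M") auto
qed

lemma mirror_row:
  fixes x :: 'a
  assumes "Suc k < M"
  defines "g \<equiv> tridiag_vec (mirror M r) (mirror M d) (mirror M l) x"
  shows "l (Suc k) * g (M - k) + d (Suc k) * g (M - Suc k) + r (Suc k) * g (M - Suc (Suc k))
    = x * g (M - Suc k)"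
proof -
  interpret mirrored: unreduced_tridiag "mirror M r" "mirror M d" "mirror M l" M
    by (rule unreduced_tridiag_mirror)
  obtain i where i: "M = Suc (Suc (i + k))"
    using assms less_iff_Suc_add[of "Suc k" M] by auto
  show ?thesis
    using mirrored.tridiag_vec_row[of i x] by (simp add: g_def mirror_def i algebra_simps)
qed

(* y solves rows 1 to M of the eigen-equation (row M because x is a root) and y M = 0. *)
lemma mirror_vec_dual:
  assumes M: "0 < M" and root: "char_minor (tridiag l d r) (Suc M) x = 0" and k: "k \<le> M"
  defines "f \<equiv> tridiag_vec l d r x" and "g \<equiv> tridiag_vec (mirror M r) (mirror M d) (mirror M l) x"
  shows "g (M - k) * f M = f k"
proof -
  interpret mirrored: unreduced_tridiag "mirror M r" "mirror M d" "mirror M l" M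
    by (rule unreduced_tridiag_mirror)
  define y where "y k = g (M - k) * f M - f k" for k
  have "y k = 0"
  proof (rule null_vector_backward[OF M _ _ _ k])
    show "l (Suc k) * y k + d (Suc k) * y (Suc k) + r (Suc k) * y (Suc (Suc k)) = x * y (Suc k)"
      if "Suc k < M" for k
    proof -
      have "l (Suc k) * y k + d (Suc k) * y (Suc k) + r (Suc k) * y (Suc (Suc k)) - x * y (Suc k)
        = f M * (l (Suc k) * g (M - k) + d (Suc k) * g (M - Suc k) + r (Suc k) * g (M - Suc (Suc k))
                 - x * g (M - Suc k))
          - (l (Suc k) * f k + d (Suc k) * f (Suc k) + r (Suc k) * f (Suc (Suc k)) - x * f (Suc k))"
        by (simp add: y_def algebra_simps)
      also have "\<dots> = 0"
        using mirror_row[OF that, of x, folded g_def] tridiag_vec_row[OF that, of x, folded f_def] by simp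
      finally show ?thesis
        by simp
    qed
    have "l M * y (M - 1) + d M * y M - x * y M
        = f M * (d M + l M * g (Suc 0) - x) - (l M * f (M - 1) + d M * f M - x * f M)"
      using M by (simp add: y_def g_def algebra_simps)
    also have "\<dots> = 0"
      using mirrored.tridiag_vec_row_0[OF M, of x] tridiag_vec_last_row[OF M, of x] root
      by (simp add: f_def g_def mirror_def)
    finally show "l M * y (M - 1) + d M * y M = x * y M"
      by simp
    show "y M = 0"
      by (simp add: y_def g_def)
  qed
  then show ?thesis
    by (simp add: y_def)
qed

theorem mirror_eigenvector:
  assumes M: "0 < M" and root: "char_minor (tridiag l d r) (Suc M) x = 0"
  defines "f \<equiv> tridiag_vec l d r x" and "g \<equiv> tridiag_vec (mirror M r) (mirror M d) (mirror M l) x"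
  shows "char_minor (tridiag (mirror M r) (mirror M d) (mirror M l)) (Suc M) x = 0"
    and "g M * f M = 1"
    and "\<And>k. k \<le> M \<Longrightarrow> g k = g M * f (M - k)"
proof -
  interpret mirrored: unreduced_tridiag "mirror M r" "mirror M d" "mirror M l" M
    by (rule unreduced_tridiag_mirror)
  note dual = mirror_vec_dual[OF M root, folded f_def g_def]
  show one: "g M * f M = 1"
    using dual[of 0] by (simp add: f_def)
  show scaled: "g k = g M * f (M - k)" if "k \<le> M" for k
  proof -
    have "g k = g (M - (M - k)) * (g M * f M)"
      using one that by simp
    also have "\<dots> = g M * f (M - k)"
      using dual[of "M - k"] by (simp add: ac_simps)
    finally show ?thesis .
  qed
  have "mirror M r M * g (M - 1) + mirror M d M * g M = g M * (d 0 * f 0 + r 0 * f (Suc 0))"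
    using scaled[of "M - 1"] scaled[of M] M by (simp add: mirror_def algebra_simps)
  also have "\<dots> = x * g M"
    using tridiag_vec_row_0[OF M, of x] by (simp add: f_def)
  finally show "char_minor (tridiag (mirror M r) (mirror M d) (mirror M l)) (Suc M) x = 0"
    using mirrored.tridiag_vec_last_row[OF M] by (simp add: g_def)
qed

lemma mirror_roots:
  assumes M: "0 < M"
  shows "{x. char_minor (tridiag (mirror M r) (mirror M d) (mirror M l)) (Suc M) x = 0}
    = {x. char_minor (tridiag l d r) (Suc M) x = 0}"
proof -
  interpret mirrored: unreduced_tridiag "mirror M r" "mirror M d" "mirror M l" M
    by (rule unreduced_tridiag_mirror)
  have "char_minor (tridiag (mirror M (mirror M l)) (mirror M (mirror M d)) (mirror M (mirror M r))) (Suc M) x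
      = char_minor (tridiag l d r) (Suc M) x" for x
    by (rule char_minor_cong) (auto simp: tridiag_def mirror_def)
  then show ?thesis
    using mirror_eigenvector(1)[OF M] mirrored.mirror_eigenvector(1)[OF M] by auto
qed

end

lemma tridiag_roots_sgn:
  fixes l d r :: "nat \<Rightarrow> real"
  assumes l: "\<And>i. 1 \<le> i \<Longrightarrow> i \<le> M \<Longrightarrow> 0 < l i" and r: "\<And>i. i < M \<Longrightarrow> 0 < r i"
  defines "Z \<equiv> {x. char_minor (tridiag l d r) (Suc M) x = 0}"
  shows "card Z = Suc M"
    and "\<And>E. E \<in> Z \<Longrightarrow> sgn (tridiag_vec l d r E M) = (-1) ^ card {y \<in> Z. E < y}"
proof -
  have I: "interlacing (\<lambda>k. char_minor (tridiag l d r) k) (Suc M)"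
    using l r by (intro interlacing_char_minor_tridiag) auto
  then show "card Z = Suc M"
    by (simp add: interlacing_def Z_def)
  fix E assume "E \<in> Z"
  then have "sgn (char_minor (tridiag l d r) M E) = (-1) ^ card {y \<in> Z. E < y}"
    using I by (simp add: interlacing_def Z_def)
  moreover have "0 < (\<Prod>j<M. inverse (r j))"
    using r by (intro prod_pos) simp
  ultimately show "sgn (tridiag_vec l d r E M) = (-1) ^ card {y \<in> Z. E < y}"
    by (simp add: tridiag_vec_def sgn_mult)
qed

section \<open>Jacobi theta functions\<close>

(* The n-th factor of each theta_r: q n is p^(2n+2) or p^(2n+1), and c is 2 cos 2z or -2 cos 2z. *)
definition theta_factor :: "real \<Rightarrow> (nat \<Rightarrow> real) \<Rightarrow> real \<Rightarrow> nat \<Rightarrow> real" where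
  "theta_factor p q c n = (1 - p ^ (2 * Suc n)) * (1 + c * q n + (q n)\<^sup>2)"

definition theta_prod :: "real \<Rightarrow> (nat \<Rightarrow> real) \<Rightarrow> real \<Rightarrow> real" where
  "theta_prod p q c = (\<Prod>n. theta_factor p q c n)"

lemma quadratic_factor_pos:
  fixes x y c :: real
  assumes "0 \<le> x" "x < 1" "0 \<le> y" "y < 1" "\<bar>c\<bar> \<le> 2"
  shows "0 < (1 - x) * (1 + c * y + y\<^sup>2)"
proof -
  have "(1 - y)\<^sup>2 \<le> 1 + c * y + y\<^sup>2"
    using assms mult_right_mono[of "-2" c y] by (simp add: power2_eq_square algebra_simps abs_le_iff)
  moreover have "0 < (1 - y)\<^sup>2"
    using assms by simp
  ultimately show ?thesis
    using assms by (intro mult_pos_pos) linarith+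
qed

lemma quadratic_factor_bound:
  fixes x y c s :: real
  assumes "0 \<le> x" "x \<le> s" "0 \<le> y" "y \<le> s" "s \<le> 1" "\<bar>c\<bar> \<le> 2"
  shows "\<bar>(1 - x) * (1 + c * y + y\<^sup>2) - 1\<bar> \<le> 4 * s"
proof -
  have "\<bar>c * y\<bar> \<le> 2 * s"
    using assms by (simp add: abs_mult mult_mono)
  moreover have "y * y \<le> 1 * s"
    using assms by (intro mult_mono) auto
  moreover have "0 \<le> y * y"
    by simp
  ultimately have "\<bar>c * y + y\<^sup>2\<bar> \<le> 3 * s"
    unfolding power2_eq_square by arith
  then have "\<bar>(1 - x) * (c * y + y\<^sup>2)\<bar> \<le> 3 * s"
    using assms by (simp add: abs_mult mult_le_one order_trans[OF mult_left_le_one_le])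
  then show ?thesis
    using assms by (simp add: algebra_simps abs_le_iff)
qed

context
  fixes p :: real and q :: "nat \<Rightarrow> real"
  assumes p: "0 < p" "p < 1" and q: "\<And>n. 0 \<le> q n" "\<And>n. q n \<le> p ^ Suc n"
begin

lemma theta_factor_bounds:
  assumes "\<bar>c\<bar> \<le> 2"
  shows "0 < theta_factor p q c n" "\<bar>theta_factor p q c n - 1\<bar> \<le> 4 * p ^ n"
proof -
  let ?x = "p ^ (2 * Suc n)" and ?s = "p ^ Suc n"
  have s: "?s \<le> p ^ n" "?s < 1" "0 \<le> ?x" "?x \<le> ?s"
    using p power_decreasing[of n "Suc n" p] power_decreasing[of "Suc n" "2 * Suc n" p]
      power_Suc_less_one[of p n] by simp_all
  have "0 < (1 - ?x) * (1 + c * q n + (q n)\<^sup>2)"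
    using s q[of n] assms by (intro quadratic_factor_pos) simp_all
  moreover have "\<bar>(1 - ?x) * (1 + c * q n + (q n)\<^sup>2) - 1\<bar> \<le> 4 * ?s"
    using s q[of n] assms by (intro quadratic_factor_bound) simp_all
  ultimately show "0 < theta_factor p q c n" "\<bar>theta_factor p q c n - 1\<bar> \<le> 4 * p ^ n"
    using s(1) unfolding theta_factor_def by simp_all
qed

lemma convergent_prod_theta_factor:
  assumes "\<bar>c\<bar> \<le> 2"
  shows "convergent_prod (theta_factor p q c)"
proof -
  have "summable (\<lambda>n. 4 * p ^ n)"
    using p by (intro summable_mult summable_geometric) simp
  then have "summable (\<lambda>n. \<bar>theta_factor p q c n - 1\<bar>)"
    by (rule summable_comparison_test'[where N = 0]) (simp add: theta_factor_bounds(2)[OF assms])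
  moreover have "theta_factor p q c n - 1 \<noteq> -1" for n
    using theta_factor_bounds(1)[OF assms, of n] by simp
  ultimately have "convergent_prod (\<lambda>n. 1 + (theta_factor p q c n - 1))"
    by (rule summable_imp_convergent_prod_real)
  then show ?thesis
    by simp
qed

lemma theta_prod_pos: "\<bar>c\<bar> \<le> 2 \<Longrightarrow> 0 < theta_prod p q c"
  unfolding theta_prod_def
  by (intro less_0_prodinf convergent_prod_theta_factor theta_factor_bounds)

lemma continuous_on_theta_prod: "continuous_on {-2..2} (theta_prod p q)"
proof -
  have cont: "continuous_on {-2..2} (\<lambda>c. theta_factor p q c n)" for n
    unfolding theta_factor_def by (intro continuous_intros)
  have "uniformly_convergent_on {-2..2} (\<lambda>N c. \<Prod>n<N. theta_factor p q c n)"
  proof (rule uniformly_convergent_on_prod'[OF cont])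
    show "uniformly_convergent_on {-2..2} (\<lambda>N c. \<Sum>n<N. norm (theta_factor p q c n - 1))"
      using theta_factor_bounds(2) p
      by (intro Weierstrass_m_test'[of _ _ "\<lambda>n. 4 * p ^ n"] summable_mult summable_geometric) auto
  qed simp
  then have "continuous_on {-2..2} (\<lambda>c. lim (\<lambda>N. \<Prod>n<N. theta_factor p q c n))"
    by (intro uniform_limit_theorem[where f = "\<lambda>N c. \<Prod>n<N. theta_factor p q c n"])
      (auto simp: uniformly_convergent_uniform_limit_iff intro!: always_eventually continuous_on_prod cont)
  moreover have "lim (\<lambda>N. \<Prod>n<N. theta_factor p q c n) = theta_prod p q c" if "c \<in> {-2..2}" for c
  proof -
    have "(\<lambda>N. \<Prod>n\<le>N. theta_factor p q c n) \<longlonglongrightarrow> theta_prod p q c"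
      unfolding theta_prod_def using that by (intro convergent_prod_LIMSEQ convergent_prod_theta_factor) auto
    then show ?thesis
      by (intro limI) (simp add: LIMSEQ_lessThan_iff_atMost)
  qed
  ultimately show ?thesis
    using continuous_on_cong[OF refl, of "{-2..2}" "\<lambda>c. lim (\<lambda>N. \<Prod>n<N. theta_factor p q c n)"
        "theta_prod p q"] by blast
qed

end

lemma power_double_exponents:
  fixes p :: "'a::monoid_mult"
  shows "p ^ (4 * Suc n) = (p ^ (2 * Suc n))\<^sup>2" "p ^ (4 * n + 2) = (p ^ (2 * n + 1))\<^sup>2"
proof -
  have "4 * Suc n = 2 * Suc n * 2" "4 * n + 2 = (2 * n + 1) * 2"
    by simp_all
  then show "p ^ (4 * Suc n) = (p ^ (2 * Suc n))\<^sup>2" "p ^ (4 * n + 2) = (p ^ (2 * n + 1))\<^sup>2"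
    by (simp_all only: power_mult)
qed

lemma theta_eq_prod:
  "theta1 p z = 2 * p powr (1/4) * sin z * theta_prod p (\<lambda>n. p ^ (2 * Suc n)) (- 2 * cos (2 * z))"
  "theta2 p z = 2 * p powr (1/4) * cos z * theta_prod p (\<lambda>n. p ^ (2 * Suc n)) (2 * cos (2 * z))"
  "theta3 p z = theta_prod p (\<lambda>n. p ^ (2 * n + 1)) (2 * cos (2 * z))"
  "theta4 p z = theta_prod p (\<lambda>n. p ^ (2 * n + 1)) (- 2 * cos (2 * z))"
  unfolding theta1_def theta2_def theta3_def theta4_def theta_prod_def theta_factor_def power_double_exponents
  by (simp_all add: algebra_simps)

lemma cos_double_reflect: "cos (2 * (pi / 2 - z)) = - cos (2 * z)"
  by (simp add: right_diff_distrib cos_diff)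

lemma theta_reflect:
  "theta1 p (pi / 2 - z) = theta2 p z" "theta2 p (pi / 2 - z) = theta1 p z"
  "theta3 p (pi / 2 - z) = theta4 p z" "theta4 p (pi / 2 - z) = theta3 p z"
  by (simp_all add: theta_eq_prod cos_double_reflect sin_diff cos_diff)

context
  fixes p :: real
  assumes p: "0 < p" "p < 1"
begin

lemma theta_nome_bounds:
  shows "0 \<le> p ^ (2 * Suc n)" "p ^ (2 * Suc n) \<le> p ^ Suc n"
    and "0 \<le> p ^ (2 * n + 1)" "p ^ (2 * n + 1) \<le> p ^ Suc n"
  using p power_decreasing[of "Suc n" "2 * Suc n" p] power_decreasing[of "Suc n" "2 * n + 1" p]
  by simp_all

lemma theta_prod_nome_pos:
  assumes "\<bar>c\<bar> \<le> 2"
  shows "0 < theta_prod p (\<lambda>n. p ^ (2 * Suc n)) c" "0 < theta_prod p (\<lambda>n. p ^ (2 * n + 1)) c"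
  by (rule theta_prod_pos[OF p _ _ assms]; simp only: theta_nome_bounds)+

lemma theta_pos:
  shows theta1_pos: "0 < z \<Longrightarrow> z < pi \<Longrightarrow> 0 < theta1 p z"
    and theta2_pos: "\<bar>z\<bar> < pi / 2 \<Longrightarrow> 0 < theta2 p z"
    and theta3_pos: "0 < theta3 p z"
    and theta4_pos: "0 < theta4 p z"
  using p theta_prod_nome_pos sin_gt_zero[of z] cos_gt_zero_pi[of z]
  by (auto simp: theta_eq_prod abs_mult abs_less_iff)

lemma theta1_has_derivative_0:
  "(theta1 p has_real_derivative 2 * p powr (1/4) * theta_prod p (\<lambda>n. p ^ (2 * Suc n)) (- 2)) (at 0)"
proof -
  let ?T = "\<lambda>z. theta_prod p (\<lambda>n. p ^ (2 * Suc n)) (- 2 * cos (2 * z))"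
  have "continuous_on UNIV (\<lambda>z::real. - 2 * cos (2 * z))"
    by (intro continuous_intros)
  moreover have "(\<lambda>z::real. - 2 * cos (2 * z)) ` UNIV \<subseteq> {-2..2}"
  proof (intro image_subsetI)
    show "- 2 * cos (2 * z) \<in> {-2..2}" for z :: real
      using cos_ge_minus_one[of "2 * z"] cos_le_one[of "2 * z"] unfolding atLeastAtMost_iff by linarith
  qed
  ultimately have "continuous_on UNIV ?T"
    by (rule continuous_on_compose2[OF continuous_on_theta_prod[OF p theta_nome_bounds(1,2)]])
  then have T: "(?T \<longlongrightarrow> ?T 0) (at 0)"
    by (meson UNIV_I continuous_on_eq_continuous_at isContD open_UNIV)
  have "((\<lambda>z. sin z / z) \<longlongrightarrow> 1) (at (0::real))"
    using DERIV_sin[of 0] by (simp add: has_field_derivative_iff)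
  then have "((\<lambda>z. 2 * p powr (1/4) * (sin z / z) * ?T z) \<longlongrightarrow> 2 * p powr (1/4) * 1 * ?T 0) (at 0)"
    by (intro tendsto_intros T)
  then show ?thesis
    by (simp add: has_field_derivative_iff theta_eq_prod)
qed

lemma deriv_theta1_pos: "0 < deriv (theta1 p) 0"
  using DERIV_imp_deriv[OF theta1_has_derivative_0] p theta_prod_nome_pos by simp

end

section \<open>The elliptic Racah matrix\<close>

lemma index_1_4_cases: "r \<in> {1..4} \<Longrightarrow> r = 1 \<or> r = 2 \<or> r = 3 \<or> r = (4::nat)"
  by auto

lemma piperm_2_commute: "r \<in> {1..4} \<Longrightarrow> s \<in> {1..4} \<Longrightarrow> piperm 2 (piperm r s) = piperm (piperm 2 r) s"
  by (auto simp: piperm_def eval_nat_numeral le_Suc_eq)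

lemma piperm_2_involution: "piperm 2 (piperm 2 s) = s"
  by (simp add: piperm_def)

lemma twist_twist [simp]: "twist (twist u) = u"
  by (simp add: twist_def fun_eq_iff piperm_2_involution)

lemma twist_12: "twist u 1 = u 2" "twist u 2 = u 1"
  by (simp_all add: twist_def piperm_def)

lemma alpha_twist [simp]: "alpha (twist u) M = alpha u M"
  unfolding alpha_def twist_12 by (simp add: add.commute)

lemma atil_twist [simp]: "atil p (twist u) (twist v) M k = acoef p u v M k"
  by (simp add: atil_def)

lemma theta_reflect_piperm:
  "r \<in> {1..4} \<Longrightarrow> theta r p (pi / 2 - z) = theta (piperm 2 r) p z"
  by (drule index_1_4_cases) (auto simp: theta_def theta_reflect piperm_def)

context
  fixes p \<alpha> :: real
  assumes p: "0 < p" "p < 1" and \<alpha>: "0 < \<alpha>"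
begin

definition brk_norm :: "nat \<Rightarrow> real" where
  "brk_norm r = (if r = 1 then \<alpha> / 2 * deriv (theta1 p) 0 else theta r p 0)"

lemma brk_eq: "brk p \<alpha> r z = theta r p (\<alpha> / 2 * z) / brk_norm r"
  by (simp add: brk_def brk_norm_def theta_def)

lemma brk_norm_pos: "0 < brk_norm r"
  using deriv_theta1_pos[OF p] theta2_pos[OF p, of 0] theta3_pos[OF p] theta4_pos[OF p] \<alpha>
  by (simp add: brk_norm_def theta_def)

lemma brk_reflect:
  assumes "r \<in> {1..4}"
  obtains K where "K \<noteq> 0" "\<And>x. brk p \<alpha> r (pi / \<alpha> - x) = K * brk p \<alpha> (piperm 2 r) x"
proof
  show "brk_norm (piperm 2 r) / brk_norm r \<noteq> 0"
    using brk_norm_pos by (simp add: less_imp_neq[symmetric])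
  fix x
  have "\<alpha> / 2 * (pi / \<alpha> - x) = pi / 2 - \<alpha> / 2 * x"
    using \<alpha> by (simp add: field_simps)
  then have "brk p \<alpha> r (pi / \<alpha> - x) = theta (piperm 2 r) p (\<alpha> / 2 * x) / brk_norm r"
    by (simp only: brk_eq theta_reflect_piperm[OF assms])
  also have "\<dots> = brk_norm (piperm 2 r) / brk_norm r * brk p \<alpha> (piperm 2 r) x"
    using brk_norm_pos[of "piperm 2 r"] by (simp add: brk_eq)
  finally show "brk p \<alpha> r (pi / \<alpha> - x) = brk_norm (piperm 2 r) / brk_norm r * brk p \<alpha> (piperm 2 r) x" .
qed

lemma brk_pos:
  shows brk1_pos: "0 < z \<Longrightarrow> z < 2 * pi / \<alpha> \<Longrightarrow> 0 < brk p \<alpha> 1 z"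
    and brk2_pos: "\<bar>z\<bar> < pi / \<alpha> \<Longrightarrow> 0 < brk p \<alpha> 2 z"
    and brk34_pos: "r = 3 \<or> r = 4 \<Longrightarrow> 0 < brk p \<alpha> r z"
proof -
  show "0 < brk p \<alpha> 1 z" if "0 < z" "z < 2 * pi / \<alpha>"
    using theta1_pos[OF p, of "\<alpha> / 2 * z"] that brk_norm_pos[of 1] \<alpha>
    by (simp add: brk_eq theta_def field_simps)
  show "0 < brk p \<alpha> 2 z" if "\<bar>z\<bar> < pi / \<alpha>"
    using theta2_pos[OF p, of "\<alpha> / 2 * z"] that brk_norm_pos[of 2] \<alpha>
    by (simp add: brk_eq theta_def field_simps abs_mult)
  show "0 < brk p \<alpha> r z" if "r = 3 \<or> r = 4"
    using theta3_pos[OF p] theta4_pos[OF p] that brk_norm_pos[of r]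
    by (auto simp: brk_eq theta_def)
qed

end

lemma alpha_pos:
  assumes "0 < u 1" "0 < u 2"
  shows "0 < alpha u M" "pi / alpha u M = u 1 + u 2 + real M"
  using assms by (simp_all add: alpha_def)

lemma acoef_pos:
  assumes p: "0 < p" "p < 1" and u: "0 < u 1" "0 < u 2"
    and v: "\<bar>v 1\<bar> < u 1 + 1/2" "\<bar>v 2\<bar> < u 2 + 1/2" and k: "1 \<le> k" "k \<le> M"
  shows "0 < acoef p u v M (int k)"
proof -
  note \<alpha> = alpha_pos[OF u, of M]
  have half_period: "2 * pi / alpha u M = 2 * (u 1 + u 2 + real M)"
    using \<alpha>(2) by (simp only: times_divide_eq_right[symmetric])
  have "0 < brk p (alpha u M) r (u 1 - u r + k) * brk p (alpha u M) r (u 1 - v r - 1/2 + k)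
      / (brk p (alpha u M) r (u 1 + k) * brk p (alpha u M) r (u 1 - 1/2 + k))" if r: "r \<in> {1..4}" for r
  proof -
    have "real k \<ge> 1" "real k \<le> real M"
      using k by simp_all
    with index_1_4_cases[OF r] show ?thesis
      using brk_pos[OF p \<alpha>(1)] u v \<alpha>(2) half_period by (auto simp: abs_less_iff)
  qed
  then show ?thesis
    unfolding acoef_def Let_def by (intro prod_pos) simp
qed

lemma cc_twist:
  assumes "r \<in> {1..4}"
  shows "cc p (twist u) (twist v) M w r = cc p u v M w (piperm 2 r)"
  unfolding cc_def Let_def alpha_twist
  by (intro arg_cong2[where f = times] refl prod.cong) (simp_all add: twist_def piperm_2_commute[OF assms])

lemma bcoef_twist:
  assumes p: "0 < p" "p < 1" and u: "0 < u 1" "0 < u 2" and i: "i \<le> M"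
  shows "bcoef p (twist u) (twist v) M w (int i) = bcoef p u v M w (int (M - i))"
proof -
  let ?B = "brk p (alpha u M)"
  note \<alpha> = alpha_pos[OF u, of M]
  define T where "T s = ?B s (u 2 + i + 1/2 + w) * ?B s (u 2 + i - 1/2 - w)
      / (?B s (u 2 + i + 1/2) * ?B s (u 2 + i - 1/2))" for s
  have "bcoef p (twist u) (twist v) M w (int i) = (\<Sum>r\<in>{1..4}. cc p u v M w (piperm 2 r) * T r)"
    unfolding bcoef_def Let_def alpha_twist twist_12
    by (intro sum.cong refl) (simp add: cc_twist T_def)
  also have "\<dots> = (\<Sum>r\<in>{1..4}. cc p u v M w r * T (piperm 2 r))"
    by (rule sum.reindex_bij_witness[of _ "piperm 2" "piperm 2"]) (auto simp: piperm_def eval_nat_numeral le_Suc_eq)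
  also have "\<dots> = bcoef p u v M w (int (M - i))"
    unfolding bcoef_def Let_def
  proof (intro sum.cong refl)
    fix r :: nat assume r: "r \<in> {1..4}"
    obtain K where K: "K \<noteq> 0" "\<And>x. ?B r (pi / alpha u M - x) = K * ?B (piperm 2 r) x"
      using brk_reflect[OF p \<alpha>(1) r] by blast
    have args: "u 1 + real_of_int (int (M - i)) + 1/2 + w = pi / alpha u M - (u 2 + i - 1/2 - w)"
      "u 1 + real_of_int (int (M - i)) - 1/2 - w = pi / alpha u M - (u 2 + i + 1/2 + w)"
      "u 1 + real_of_int (int (M - i)) + 1/2 = pi / alpha u M - (u 2 + i - 1/2)"
      "u 1 + real_of_int (int (M - i)) - 1/2 = pi / alpha u M - (u 2 + i + 1/2)"
      using \<alpha>(2) i by simp_all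
    show "cc p u v M w r * T (piperm 2 r)
      = cc p u v M w r * ?B r (u 1 + real_of_int (int (M - i)) + 1/2 + w) * ?B r (u 1 + real_of_int (int (M - i)) - 1/2 - w)
        / (?B r (u 1 + real_of_int (int (M - i)) + 1/2) * ?B r (u 1 + real_of_int (int (M - i)) - 1/2))"
      (* args(3,4) rewrite subterms of the left-hand sides of args(1,2), so the latter go first. *)
      unfolding args(1,2) unfolding args(3,4) K(2) T_def using K(1) by (simp add: ac_simps)
  qed
  finally show ?thesis .
qed

lemma fvec_last_eq:
  "fvec p u v M w M x = ppoly p u v M w M x / (\<Prod>k\<in>{1..M}. atil p u v M (int k))"
proof -
  have "(\<Prod>j<M. inverse (atil p u v M (int M - int j))) = (\<Prod>j<M. inverse (atil p u v M (int (M - j))))"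
    by (intro prod.cong) simp_all
  also have "\<dots> = inverse (\<Prod>k\<in>{1..M}. atil p u v M (int k))"
    by (rule prod_inverse_reflect)
  finally show ?thesis
    by (simp add: fvec_def divide_inverse)
qed

lemma ppoly_eq_char_minor:
  assumes "\<And>i j. i \<le> M \<Longrightarrow> j \<le> M \<Longrightarrow> Hent p u v M w i j = h i j" and "k \<le> Suc M"
  shows "ppoly p u v M w k x = char_minor h k x"
proof -
  have "ppoly p u v M w k x = char_minor (Hent p u v M w) k x"
    by (simp add: ppoly_def char_minor_def char_mat_def)
  also have "\<dots> = char_minor h k x"
    using assms by (intro char_minor_cong) simp
  finally show ?thesis .
qed

lemma Eig_eq_char_minor_roots:
  assumes "\<And>i j. i \<le> M \<Longrightarrow> j \<le> M \<Longrightarrow> Hent p u v M w i j = h i j"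
  shows "Eig p u v M w j = rev (sorted_list_of_set {x. char_minor h (Suc M) x = 0}) ! j"
proof -
  have "eigenvalue (Hmat p u v M w) e \<longleftrightarrow> char_minor h (Suc M) e = 0" for e
    using ppoly_eq_char_minor[OF assms, of "Suc M"] eigenvalue_iff_char_minor[of "Suc M" "Hent p u v M w" e]
    by (simp add: Hmat_def ppoly_def char_minor_def char_mat_def)
  then show ?thesis
    by (simp add: Eig_def)
qed

locale elliptic_racah =
  fixes p :: real and u v :: "nat \<Rightarrow> real" and M :: nat and w :: real
  assumes nome: "0 < p" "p < 1" and u_pos: "0 < u 1" "0 < u 2"
    and v_bound: "\<bar>v 1\<bar> < u 1 + 1/2" "\<bar>v 2\<bar> < u 2 + 1/2" and M_pos: "0 < M"
begin

definition sub :: "nat \<Rightarrow> real" where "sub k = acoef p u v M (int k)"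
definition diag :: "nat \<Rightarrow> real" where "diag k = bcoef p u v M w (int k)"
definition super :: "nat \<Rightarrow> real" where "super k = atil p u v M (int M - int k)"

lemma sub_pos: "1 \<le> k \<Longrightarrow> k \<le> M \<Longrightarrow> 0 < sub k"
  unfolding sub_def using nome u_pos v_bound by (rule acoef_pos)

lemma super_pos: "k < M \<Longrightarrow> 0 < super k"
  using acoef_pos[OF nome, of "twist u" "twist v" "M - k" M] nome u_pos v_bound
  unfolding twist_12 by (simp add: super_def atil_def)

sublocale unreduced_tridiag sub diag super M
  using sub_pos super_pos by unfold_locales (auto simp: less_imp_neq[symmetric])

lemma Hent_eq_tridiag: "i \<le> M \<Longrightarrow> j \<le> M \<Longrightarrow> Hent p u v M w i j = tridiag sub diag super i j"
  by (auto simp: Hent_def tridiag_def sub_def diag_def super_def)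

lemma Hent_twist_eq_tridiag:
  "i \<le> M \<Longrightarrow> j \<le> M \<Longrightarrow>
    Hent p (twist u) (twist v) M w i j = tridiag (mirror M super) (mirror M diag) (mirror M sub) i j"
  using bcoef_twist[OF nome u_pos, of i M v w]
  by (auto simp: Hent_def tridiag_def sub_def diag_def super_def mirror_def atil_def)

lemma ppoly_eq: "k \<le> Suc M \<Longrightarrow> ppoly p u v M w k x = char_minor (tridiag sub diag super) k x"
  by (rule ppoly_eq_char_minor[OF Hent_eq_tridiag])

lemma ppoly_twist_eq:
  "k \<le> Suc M \<Longrightarrow>
    ppoly p (twist u) (twist v) M w k x = char_minor (tridiag (mirror M super) (mirror M diag) (mirror M sub)) k x"
  by (rule ppoly_eq_char_minor[OF Hent_twist_eq_tridiag])

lemma fvec_eq: "k \<le> Suc M \<Longrightarrow> fvec p u v M w k x = tridiag_vec sub diag super x k"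
  by (simp add: fvec_def tridiag_vec_def ppoly_eq super_def)

lemma fvec_twist_eq:
  assumes "k \<le> M"
  shows "fvec p (twist u) (twist v) M w k x = tridiag_vec (mirror M super) (mirror M diag) (mirror M sub) x k"
proof -
  have "(\<Prod>j<k. inverse (atil p (twist u) (twist v) M (int M - int j))) = (\<Prod>j<k. inverse (mirror M sub j))"
    using assms by (intro prod.cong) (simp_all add: mirror_def sub_def atil_def)
  then show ?thesis
    using assms by (simp add: fvec_def tridiag_vec_def ppoly_twist_eq)
qed

theorem Eig_duality:
  assumes "j \<le> M"
  defines "E \<equiv> Eig p u v M w j"
  shows "Eig p (twist u) (twist v) M w j = E"
    and "\<And>k. k \<le> M \<Longrightarrow> fvec p (twist u) (twist v) M w k E
           = fvec p (twist u) (twist v) M w M E * fvec p u v M w (M - k) E"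
    and "fvec p (twist u) (twist v) M w M E * fvec p u v M w M E = 1"
    and "sgn (fvec p u v M w M E) = (-1) ^ j"
proof -
  define Z where "Z = {x. char_minor (tridiag sub diag super) (Suc M) x = 0}"
  have roots: "card Z = Suc M"
    "\<And>E. E \<in> Z \<Longrightarrow> sgn (tridiag_vec sub diag super E M) = (-1) ^ card {y \<in> Z. E < y}"
    using tridiag_roots_sgn[where l = sub and d = diag and r = super and M = M] sub_pos super_pos
    unfolding Z_def by blast+
  have E: "E = rev (sorted_list_of_set Z) ! j"
    using Eig_eq_char_minor_roots[OF Hent_eq_tridiag] by (simp add: E_def Z_def)
  have "finite Z"
    using roots(1) by (intro card_ge_0_finite) simp
  then have E_root: "E \<in> Z" and E_rank: "card {y \<in> Z. E < y} = j"
    using rev_sorted_list_of_set_nth[of Z j] roots(1) assms(1) by (simp_all add: E)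
  show "Eig p (twist u) (twist v) M w j = E"
    using Eig_eq_char_minor_roots[OF Hent_twist_eq_tridiag] mirror_roots[OF M_pos] by (simp add: E Z_def)
  note dual = mirror_eigenvector[OF M_pos E_root[unfolded Z_def, simplified]]
  show "fvec p (twist u) (twist v) M w k E = fvec p (twist u) (twist v) M w M E * fvec p u v M w (M - k) E"
    if "k \<le> M" for k
    using dual(3)[OF that] that by (simp add: fvec_eq fvec_twist_eq)
  show "fvec p (twist u) (twist v) M w M E * fvec p u v M w M E = 1"
    using dual(2) by (simp add: fvec_eq fvec_twist_eq)
  show "sgn (fvec p u v M w M E) = (-1) ^ j"
    using roots(2)[OF E_root] E_rank by (simp add: fvec_eq)
qed

end

lemma sgn_eq_of_mult_eq_1: "(a::real) * b = 1 \<Longrightarrow> sgn a = sgn b"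
  using zero_less_mult_iff[of a b] by (auto simp: sgn_if)

theorem mainTheorem6:
  fixes p :: real and u v :: "nat \<Rightarrow> real" and M :: nat and w :: real
  assumes "0 < p" "p < 1"
    and "u 1 > 0" "u 2 > 0" "\<bar>v 1\<bar> < u 1 + 1/2" "\<bar>v 2\<bar> < u 2 + 1/2"
    and "M \<ge> 1"
    and "\<forall>n::int. w \<noteq> 2 * pi / alpha u M * n" "\<forall>n::int. w + 1 \<noteq> 2 * pi / alpha u M * n"
  shows "\<forall>j\<le>M.
    (let E = Eig p u v M w j;
         eps = ppoly p (twist u) (twist v) M w M E / (\<Prod>k\<in>{1..M}. acoef p u v M (int k));
         epst = ppoly p u v M w M E / (\<Prod>k\<in>{1..M}. atil p u v M (int k))
     in Eig p (twist u) (twist v) M w j = E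
        \<and> (\<forall>k\<le>M. fvec p (twist u) (twist v) M w k E = eps * fvec p u v M w (M - k) E)
        \<and> eps * epst = 1 \<and> sgn eps = (-1)^j \<and> sgn epst = (-1)^j)"
proof -
  (* The conditions on w only keep c_r finite. *)
  interpret elliptic_racah p u v M w
    using assms(1-7) by unfold_locales simp_all
  have eps: "ppoly p (twist u) (twist v) M w M x / (\<Prod>k\<in>{1..M}. acoef p u v M (int k))
      = fvec p (twist u) (twist v) M w M x" for x
    by (simp add: fvec_last_eq)
  have epst: "ppoly p u v M w M x / (\<Prod>k\<in>{1..M}. atil p u v M (int k)) = fvec p u v M w M x" for x
    by (simp add: fvec_last_eq)
  have sgn_eps: "sgn (fvec p (twist u) (twist v) M w M (Eig p u v M w j)) = (-1) ^ j" if "j \<le> M" for j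
    using sgn_eq_of_mult_eq_1[OF Eig_duality(3)[OF that]] Eig_duality(4)[OF that] by simp
  show ?thesis
    unfolding Let_def eps epst
    using Eig_duality sgn_eps by blast
qed

end
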